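(* Let $z\ge1$, $k\ge1$, $X\subset[\Delta]^d$ finite, and $\gamma\ge1$ a fixed constant. Let $C\subseteq X$ be a set of $k$ centers that is a $\gamma$-approximation to the optimal $(k,z)$-medoids clustering on $X$. Fix $x\in X$ and let $S$ be an optimal $(k,z)$-medoids clustering on $X$ among those containing a center at $x$. Let $W\subseteq C$ be a set of $k-1$ centers such that $W\cup\{x\}$ has minimum $(k,z)$-medoids clustering cost on $X$ among all $(k-1)$-subsets of $C$, and let $C'=W\cup\{x\}$. Then \[\mathrm{Cost}(X,S)\le\mathrm{Cost}(X,C')\le(2^z+2^{2z}+2^{2z}\gamma)\cdot\mathrm{Cost}(X,S).\]
   Context: $\mathrm{Cost}(X,C)=\sum_{y\in X}\min_{c\in C}\|y-c\|_2^z$. The $(k,z)$-medoids clustering problem on $X$ asks for a set $C\subseteq X$ with $|C|\le k$ minimizing $\mathrm{Cost}(X,C)$; $C$ is a $\gamma$-approximation if its cost is at most $\gamma$ times the optimum. *)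

theory Defs
  imports "HOL-Analysis.Analysis"
begin

definition grid :: "nat \<Rightarrow> (real ^ 'd) set" where
  "grid \<Delta> = {p. \<forall>i. p $ i \<in> real ` {1..\<Delta>}}"

definition cost :: "real \<Rightarrow> (real ^ 'd) set \<Rightarrow> (real ^ 'd) set \<Rightarrow> real" where
  "cost z X C = (\<Sum>y\<in>X. Min ((\<lambda>c. norm (y - c) powr z) ` C))"

definition medoids_feasible :: "(real ^ 'd) set \<Rightarrow> nat \<Rightarrow> (real ^ 'd) set \<Rightarrow> bool" where
  "medoids_feasible X k C \<longleftrightarrow> C \<subseteq> X \<and> C \<noteq> {} \<and> card C \<le> k"

definition opt_cost :: "real \<Rightarrow> (real ^ 'd) set \<Rightarrow> nat \<Rightarrow> real" where
  "opt_cost z X k = Min {cost z X C | C. medoids_feasible X k C}"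

definition gamma_approx :: "real \<Rightarrow> real \<Rightarrow> (real ^ 'd) set \<Rightarrow> nat \<Rightarrow> (real ^ 'd) set \<Rightarrow> bool" where
  "gamma_approx \<gamma> z X k C \<longleftrightarrow> medoids_feasible X k C \<and> cost z X C \<le> \<gamma> * opt_cost z X k"

end

theory Submission
  imports Defs
begin

text \<open>Let \<open>y \<in> X\<close> be served by \<open>s\<close> in \<open>S\<close> and by \<open>c(y)\<close> in \<open>C\<close>. If \<open>s = x\<close>, then \<open>x\<close>
  serves \<open>y\<close> in \<open>C'\<close> at least as well. Otherwise the centre \<open>c(s)\<close> of \<open>C\<close> nearest to \<open>s\<close>
  satisfies \<open>d(y, c(s)) \<le> d(y, s) + d(s, c(y)) \<le> 2 d(y, s) + d(y, c(y))\<close>. The at most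
  \<open>k - 1\<close> centres \<open>c(s)\<close>, \<open>s \<in> S - {x}\<close>, extend to a \<open>(k - 1)\<close>-subset \<open>W'\<close> of \<open>C\<close>, so
  by minimality of \<open>W\<close> and \<open>(a + b)\<^sup>z \<le> 2\<^sup>z (a\<^sup>z + b\<^sup>z)\<close>,
  \<open>Cost(X, C') \<le> Cost(X, W' \<union> {x}) \<le> 2\<^bsup>2z\<^esup> Cost(X, S) + 2\<^sup>z Cost(X, C)\<close>,
  while \<open>Cost(X, C) \<le> \<gamma> OPT \<le> \<gamma> Cost(X, S)\<close>.\<close>

lemma powr_add_le_two_powr:
  fixes a b z :: real
  assumes "0 \<le> a" "0 \<le> b" "0 \<le> z"
  shows "(a + b) powr z \<le> 2 powr z * (a powr z + b powr z)"
proof -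
  have "(a + b) powr z \<le> (2 * max a b) powr z"
    using assms by (intro powr_mono2) auto
  also have "\<dots> = 2 powr z * max a b powr z"
    using assms by (simp add: powr_mult)
  also have "max a b powr z \<le> a powr z + b powr z"
    by (simp add: max_def)
  finally show ?thesis
    by simp
qed

lemma cost_nonneg:
  assumes "finite C" "C \<noteq> {}"
  shows "0 \<le> cost z X C"
  unfolding cost_def using assms by (intro sum_nonneg) auto

lemma Min_powr_le_nearest_cover:
  fixes S C T :: "'a::real_normed_vector set"
  assumes "finite S" "S \<noteq> {}" "finite C" "C \<noteq> {}" "finite T" "0 \<le> z"
    and cover: "\<And>s. s \<in> S \<Longrightarrow> \<exists>t\<in>T. \<forall>c\<in>C. norm (s - t) \<le> norm (s - c)"
  shows "Min ((\<lambda>c. norm (y - c) powr z) ` T)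
    \<le> 2 powr (2 * z) * Min ((\<lambda>c. norm (y - c) powr z) ` S)
      + 2 powr z * Min ((\<lambda>c. norm (y - c) powr z) ` C)"
proof -
  have "Min ((\<lambda>c. norm (y - c) powr z) ` S) \<in> (\<lambda>c. norm (y - c) powr z) ` S"
    using assms(1,2) by simp
  then obtain s where "s \<in> S" and S_min: "Min ((\<lambda>c. norm (y - c) powr z) ` S) = norm (y - s) powr z"
    by blast
  have "Min ((\<lambda>c. norm (y - c) powr z) ` C) \<in> (\<lambda>c. norm (y - c) powr z) ` C"
    using assms(3,4) by simp
  then obtain c where "c \<in> C" and C_min: "Min ((\<lambda>c. norm (y - c) powr z) ` C) = norm (y - c) powr z"
    by blast
  obtain t where "t \<in> T" and "norm (s - t) \<le> norm (s - c)"
    using cover \<open>s \<in> S\<close> \<open>c \<in> C\<close> by blast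
  have "norm (y - t) \<le> norm (y - s) + norm (s - t)"
    using norm_triangle_ineq[of "y - s" "s - t"] by simp
  also have "\<dots> \<le> norm (y - s) + norm (s - c)"
    using \<open>norm (s - t) \<le> norm (s - c)\<close> by simp
  also have "\<dots> \<le> 2 * norm (y - s) + norm (y - c)"
    using norm_triangle_ineq[of "s - y" "y - c"] by (simp add: norm_minus_commute)
  finally have dist_t: "norm (y - t) \<le> 2 * norm (y - s) + norm (y - c)" .
  have "Min ((\<lambda>c. norm (y - c) powr z) ` T) \<le> norm (y - t) powr z"
    using \<open>finite T\<close> \<open>t \<in> T\<close> by (intro Min_le) auto
  also have "\<dots> \<le> (2 * norm (y - s) + norm (y - c)) powr z"
    using dist_t \<open>0 \<le> z\<close> by (intro powr_mono2) auto
  also have "\<dots> \<le> 2 powr z * ((2 * norm (y - s)) powr z + norm (y - c) powr z)"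
    using \<open>0 \<le> z\<close> by (intro powr_add_le_two_powr) auto
  also have "\<dots> = 2 powr z * 2 powr z * norm (y - s) powr z + 2 powr z * norm (y - c) powr z"
    by (simp add: powr_mult algebra_simps)
  also have "2 powr z * 2 powr z = 2 powr (2 * z)"
    by (simp add: powr_add[symmetric])
  finally show ?thesis
    using S_min C_min by simp
qed

lemma cost_le_nearest_cover:
  fixes S C T :: "(real ^ 'd) set"
  assumes "finite S" "S \<noteq> {}" "finite C" "C \<noteq> {}" "finite T" "0 \<le> z"
    and "\<And>s. s \<in> S \<Longrightarrow> \<exists>t\<in>T. \<forall>c\<in>C. norm (s - t) \<le> norm (s - c)"
  shows "cost z X T \<le> 2 powr (2 * z) * cost z X S + 2 powr z * cost z X C"
proof -
  have "cost z X T \<le> (\<Sum>y\<in>X. 2 powr (2 * z) * Min ((\<lambda>c. norm (y - c) powr z) ` S)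
      + 2 powr z * Min ((\<lambda>c. norm (y - c) powr z) ` C))"
    unfolding cost_def using assms by (intro sum_mono Min_powr_le_nearest_cover)
  then show ?thesis
    by (simp add: cost_def sum.distrib sum_distrib_left)
qed

lemma opt_cost_le:
  assumes "finite X" "medoids_feasible X k S"
  shows "opt_cost z X k \<le> cost z X S"
proof -
  have "{cost z X C | C. medoids_feasible X k C} \<subseteq> cost z X ` Pow X"
    unfolding medoids_feasible_def by auto
  then have "finite {cost z X C | C. medoids_feasible X k C}"
    using \<open>finite X\<close> finite_subset by blast
  then show ?thesis
    unfolding opt_cost_def using assms(2) by (intro Min_le) auto
qed

lemma gamma_approx_cost_le:
  assumes "gamma_approx \<gamma> z X k C" "0 \<le> \<gamma>" "finite X" "medoids_feasible X k S"
  shows "cost z X C \<le> \<gamma> * cost z X S"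
proof -
  have "cost z X C \<le> \<gamma> * opt_cost z X k"
    using assms(1) unfolding gamma_approx_def by blast
  also have "\<dots> \<le> \<gamma> * cost z X S"
    using opt_cost_le[OF assms(3,4)] assms(2) by (intro mult_left_mono)
  finally show ?thesis .
qed

lemma medoids_feasible_insert:
  assumes "W \<subseteq> X" "finite W" "card W < k" "x \<in> X"
  shows "medoids_feasible X k (W \<union> {x})"
  using assms card_insert_le_m1[of k W x] unfolding medoids_feasible_def
  by (simp add: card_insert_if)

lemma obtain_subset_containing_nearest:
  fixes C S :: "'a::real_normed_vector set"
  assumes "finite C" "C \<noteq> {}" "finite S" "x \<in> S" "card S \<le> card C"
  obtains W' where "W' \<subseteq> C" "card W' = card C - 1"
    "\<And>s. s \<in> S \<Longrightarrow> \<exists>t\<in>W' \<union> {x}. \<forall>c\<in>C. norm (s - t) \<le> norm (s - c)"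
proof -
  define nearest where "nearest s = arg_min_on (\<lambda>c. norm (s - c)) C" for s
  have "card (nearest ` (S - {x})) \<le> card C - 1"
    using card_image_le[of "S - {x}" nearest] assms(3-5) by simp
  moreover have "nearest ` (S - {x}) \<subseteq> C"
    unfolding nearest_def using arg_min_if_finite(1)[OF assms(1,2)] by blast
  ultimately obtain W' where W': "nearest ` (S - {x}) \<subseteq> W'" "W' \<subseteq> C" "card W' = card C - 1"
    using exists_subset_between[OF _ _ _ assms(1)] by (metis diff_le_self)
  have "\<exists>t\<in>W' \<union> {x}. \<forall>c\<in>C. norm (s - t) \<le> norm (s - c)" if "s \<in> S" for s
  proof (cases "s = x")
    case False
    have "\<forall>c\<in>C. norm (s - nearest s) \<le> norm (s - c)"
      unfolding nearest_def using arg_min_least[OF assms(1,2), of _ "\<lambda>c. norm (s - c)"] by simp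
    moreover have "nearest s \<in> W'"
      using W'(1) that False by blast
    ultimately show ?thesis
      by blast
  qed simp
  with W'(2,3) show thesis
    using that by blast
qed

lemma obtain_subset_cost_le:
  fixes C S :: "(real ^ 'd) set"
  assumes "finite C" "C \<noteq> {}" "finite S" "x \<in> S" "card S \<le> card C" "0 \<le> z"
  obtains W' where "W' \<subseteq> C" "card W' = card C - 1"
    "cost z X (W' \<union> {x}) \<le> 2 powr (2 * z) * cost z X S + 2 powr z * cost z X C"
proof -
  obtain W' where W': "W' \<subseteq> C" "card W' = card C - 1"
    and cover: "\<And>s. s \<in> S \<Longrightarrow> \<exists>t\<in>W' \<union> {x}. \<forall>c\<in>C. norm (s - t) \<le> norm (s - c)"
    using obtain_subset_containing_nearest[OF assms(1-5)] by metis
  have "finite (W' \<union> {x})"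
    using W'(1) \<open>finite C\<close> finite_subset by blast
  moreover have "S \<noteq> {}"
    using \<open>x \<in> S\<close> by blast
  ultimately show thesis
    using that W' cost_le_nearest_cover[OF assms(3) _ assms(1,2) _ assms(6) cover] by blast
qed

theorem lemma3p5:
  fixes z \<gamma> :: real and k \<Delta> :: nat
    and X C S W :: "(real ^ 'd) set" and x :: "real ^ 'd"
  assumes "z \<ge> 1" and "k \<ge> 1" and "\<gamma> \<ge> 1"
    and "finite X" and "X \<subseteq> grid \<Delta>"
    and "C \<subseteq> X" and "card C = k" and "gamma_approx \<gamma> z X k C"
    and "x \<in> X"
    and "medoids_feasible X k S" and "x \<in> S"
    and "\<And>S'. medoids_feasible X k S' \<Longrightarrow> x \<in> S' \<Longrightarrow> cost z X S \<le> cost z X S'"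
    and "W \<subseteq> C" and "card W = k - 1"
    and "\<And>W'. W' \<subseteq> C \<Longrightarrow> card W' = k - 1 \<Longrightarrow> cost z X (W \<union> {x}) \<le> cost z X (W' \<union> {x})"
  shows "cost z X S \<le> cost z X (W \<union> {x})
       \<and> cost z X (W \<union> {x}) \<le> (2 powr z + 2 powr (2*z) + 2 powr (2*z) * \<gamma>) * cost z X S"
proof
  have "S \<subseteq> X"
    using assms(10) unfolding medoids_feasible_def by blast
  then have "finite C" "finite S" "finite W"
    using assms(4,6,13) by (auto intro: finite_subset)
  have "C \<noteq> {}" "S \<noteq> {}" "card S \<le> card C" "0 \<le> z"
    using assms(1,2,7,10,11) unfolding medoids_feasible_def by auto
  have "medoids_feasible X k (W \<union> {x})"
    using assms(2,6,9,13,14) \<open>finite W\<close> by (intro medoids_feasible_insert) auto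
  then show "cost z X S \<le> cost z X (W \<union> {x})"
    using assms(12) by simp
  obtain W' where "W' \<subseteq> C" "card W' = k - 1"
    and W'_cost: "cost z X (W' \<union> {x}) \<le> 2 powr (2 * z) * cost z X S + 2 powr z * cost z X C"
    using obtain_subset_cost_le[OF \<open>finite C\<close> \<open>C \<noteq> {}\<close> \<open>finite S\<close> assms(11) \<open>card S \<le> card C\<close>
        \<open>0 \<le> z\<close>] assms(7) by metis
  have "2 powr z * cost z X C \<le> 2 powr (2 * z) * (\<gamma> * cost z X S)"
    using gamma_approx_cost_le[OF assms(8) _ assms(4,10)] cost_nonneg[OF \<open>finite C\<close> \<open>C \<noteq> {}\<close>]
      assms(1,3) by (intro mult_mono powr_mono) auto
  moreover have "0 \<le> 2 powr z * cost z X S"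
    using cost_nonneg[OF \<open>finite S\<close> \<open>S \<noteq> {}\<close>] by simp
  moreover have "cost z X (W \<union> {x}) \<le> cost z X (W' \<union> {x})"
    using assms(15) \<open>W' \<subseteq> C\<close> \<open>card W' = k - 1\<close> .
  ultimately show "cost z X (W \<union> {x}) \<le> (2 powr z + 2 powr (2*z) + 2 powr (2*z) * \<gamma>) * cost z X S"
    using W'_cost by (simp add: algebra_simps)
qed

end
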